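(* Let $\lambda>0$ and integers $p\ge0$, $0\le k\le p+1$. Then $\{h^\lambda_{j,p}:0\le j<k\}$ is a basis of $V_{k,\lambda}(p)$, where $h^\lambda_{j,p}(z,w)=\sum_{j\le i\le p}\binom ij\binom{p-i+\lambda-1}{p-i}z^iw^{p-i}$.
   Context: For $\lambda>0$, $\mathcal H^{(\lambda)}$ is the Hilbert space of holomorphic functions on $\mathbb D$ with reproducing kernel $(1-z\bar w)^{-\lambda}$, and $H^2$ the Hardy space. $\mathcal H^{(\lambda)}\otimes H^2$ is identified with a Hilbert space of holomorphic functions on $\mathbb D^2$ via $f\otimes g\mapsto((z,w)\mapsto g(z)f(w))$. $Hom(p)$ is the space of homogeneous polynomials of degree $p$ in $z,w$, so that $\mathcal H^{(\lambda)}\otimes H^2=\bigoplus_{p\ge0}Hom(p)$ orthogonally. Let $\triangle=\{(z,z):z\in\mathbb D\}$. $V_{k,\lambda}$ is the orthogonal complement in $\mathcal H^{(\lambda)}\otimes H^2$ of the set of all $h\in\mathcal H^{(\lambda)}\otimes H^2$ vanishing to order $\ge k$ on $\triangle$ (i.e. all partial derivatives of $h$ of order $<k$ vanish on $\triangle$), and $V_{k,\lambda}(p)=Hom(p)\cap V_{k,\lambda}$. *)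

theory Defs
  imports "HOL-Analysis.Analysis"
begin

text \<open>Concrete model of the Hilbert space H^(lam) (x) H^2 on the bidisc:
  an element is given by its Taylor coefficients a i j of z^i w^j, where the
  z-variable carries the Hardy space H^2 (norm of z^i is 1) and the w-variable carries
  H^(lam) (squared norm of w^j is j!/(lam)_j, from the kernel (1 - z conj w)^(-lam)).\<close>

type_synonym coeffs = "nat \<Rightarrow> nat \<Rightarrow> complex"

definition wt :: "real \<Rightarrow> nat \<Rightarrow> real" where
  "wt lam j = fact j / pochhammer lam j"

definition Hspace :: "real \<Rightarrow> coeffs set" where
  "Hspace lam = {a. (\<lambda>(i,j). (cmod (a i j))\<^sup>2 * wt lam j) summable_on UNIV}"

definition ip :: "real \<Rightarrow> coeffs \<Rightarrow> coeffs \<Rightarrow> complex" where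
  "ip lam a b = (\<Sum>\<^sub>\<infinity>(i,j). a i j * cnj (b i j) * of_real (wt lam j))"

definition fn :: "coeffs \<Rightarrow> complex \<Rightarrow> complex \<Rightarrow> complex" where
  "fn a z w = (\<Sum>\<^sub>\<infinity>(i,j). a i j * z ^ i * w ^ j)"

definition pder :: "nat \<Rightarrow> nat \<Rightarrow> (complex \<Rightarrow> complex \<Rightarrow> complex) \<Rightarrow> complex \<Rightarrow> complex \<Rightarrow> complex" where
  "pder m n F z w = (deriv ^^ m) (\<lambda>z'. (deriv ^^ n) (\<lambda>w'. F z' w') w) z"

definition vanish_diag :: "nat \<Rightarrow> coeffs \<Rightarrow> bool" where
  "vanish_diag k a \<longleftrightarrow> (\<forall>m n z. m + n < k \<longrightarrow> z \<in> ball 0 1 \<longrightarrow> pder m n (fn a) z z = 0)"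

definition V :: "nat \<Rightarrow> real \<Rightarrow> coeffs set" where
  "V k lam = {a \<in> Hspace lam. \<forall>b \<in> Hspace lam. vanish_diag k b \<longrightarrow> ip lam a b = 0}"

definition Hom :: "real \<Rightarrow> nat \<Rightarrow> coeffs set" where
  "Hom lam p = {a \<in> Hspace lam. \<forall>i j. i + j \<noteq> p \<longrightarrow> a i j = 0}"

definition Vp :: "nat \<Rightarrow> real \<Rightarrow> nat \<Rightarrow> coeffs set" where
  "Vp k lam p = Hom lam p \<inter> V k lam"

definition hcoef :: "real \<Rightarrow> nat \<Rightarrow> nat \<Rightarrow> coeffs" where
  "hcoef lam j p = (\<lambda>i l. if i + l = p \<and> j \<le> i
      then of_real (real (i choose j) * ((real (p - i) + lam - 1) gchoose (p - i))) else 0)"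

end

theory Submission
  imports Defs "HOL-Complex_Analysis.Complex_Analysis"
begin

(* Write f in Hom(p) as f(z,w) = sum_i f_i z^i w^(p-i) and put u_i = f_i wt(p-i), so that
   <f, g> = sum_i u_i conj(g_i) for g in Hom(p).

   If g vanishes to order k on the diagonal, then for j < k the Taylor coefficients of
   d^j/dz^j g at (t,t) vanish, i.e. sum_i C(i,j) g_{i,p-i} = 0 in every degree p; since the
   coefficients of h_{j,p} are C(i,j) / wt(p-i), this sum is conj <h_{j,p}, g>, so h_{j,p} lies in V_k.
   Conversely, (z-w)^k z^a w^(p-k-a) vanishes to order k on the diagonal, and orthogonality of
   f to it says that the k-th forward difference of u at a vanishes.  Hence u_i is a polynomial
   of degree < k in i, i.e. a combination of the C(i,j) with j < k, which is the statement
   f = sum_j c_j h_{j,p}.  Linear independence is triangularity: h_{j,p} has no z^i w^(p-i)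
   term for i < j. *)

section \<open>Finite differences\<close>

definition fwd_diff :: "nat \<Rightarrow> (nat \<Rightarrow> 'a::comm_ring_1) \<Rightarrow> nat \<Rightarrow> 'a" where
  "fwd_diff k g a = (\<Sum>r\<le>k. (-1) ^ (k - r) * of_nat (k choose r) * g (a + r))"

lemma fwd_diff_Suc: "fwd_diff (Suc k) g a = fwd_diff k (\<lambda>n. g (Suc n) - g n) a"
proof -
  define A where "A = (\<Sum>r\<le>k. (-1) ^ (k - r) * of_nat (k choose r) * g (a + r))"
  define B where "B = (\<Sum>r\<le>k. (-1) ^ (k - r) * of_nat (k choose r) * g (a + Suc r))"
  have shift: "(\<Sum>r\<le>Suc k. (-1) ^ (Suc k - r) * of_nat (k choose r) * g (a + r))
     = (-1) ^ Suc k * g a + (\<Sum>i\<le>k. (-1) ^ (k - i) * of_nat (k choose Suc i) * g (a + Suc i))"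
    by (subst sum.atMost_Suc_shift) simp
  have "(\<Sum>r\<le>Suc k. (-1) ^ (Suc k - r) * of_nat (k choose r) * g (a + r)) = - A"
    unfolding A_def sum_negf[symmetric] sum.atMost_Suc
    by (auto simp: binomial_eq_0 Suc_diff_le intro!: sum.cong)
  moreover have "fwd_diff (Suc k) g a
     = (-1) ^ Suc k * g a + (\<Sum>i\<le>k. (-1) ^ (k - i) * of_nat (Suc k choose Suc i) * g (a + Suc i))"
    unfolding fwd_diff_def by (subst sum.atMost_Suc_shift) simp
  ultimately have "fwd_diff (Suc k) g a = B - A"
    using shift unfolding B_def by (simp add: sum.distrib algebra_simps)
  then show ?thesis
    unfolding A_def B_def fwd_diff_def by (simp add: sum_subtractf[symmetric] algebra_simps)
qed

lemma fwd_diff_diff: "fwd_diff k (\<lambda>n. f n - g n) a = fwd_diff k f a - fwd_diff k g a"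
  by (simp add: fwd_diff_def sum_subtractf[symmetric] algebra_simps)

lemma fwd_diff_sum:
  "fwd_diff k (\<lambda>n. \<Sum>j\<in>J. g j n * d j) a = (\<Sum>j\<in>J. fwd_diff k (g j) a * d j)"
  by (simp add: fwd_diff_def sum_distrib_left sum_distrib_right mult_ac sum.swap[of _ "{..k}"])

lemma fwd_diff_choose: "j < k \<Longrightarrow> fwd_diff k (\<lambda>n. of_nat (n choose j) :: 'a::comm_ring_1) a = 0"
proof (induction k arbitrary: j)
  case 0
  then show ?case by simp
next
  case (Suc k)
  show ?case
  proof (cases j)
    case 0
    then show ?thesis unfolding fwd_diff_Suc by (simp add: fwd_diff_def)
  next
    case (Suc i)
    then have "fwd_diff (Suc k) (\<lambda>n. of_nat (n choose j) :: 'a) a = fwd_diff k (\<lambda>n. of_nat (n choose i)) a"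
      by (simp add: fwd_diff_Suc)
    also have "\<dots> = 0"
      using Suc.IH[of i] Suc.prems Suc by simp
    finally show ?thesis .
  qed
qed

lemma choose_interpolation:
  fixes u :: "nat \<Rightarrow> 'a::comm_ring_1"
  shows "\<exists>d. \<forall>i<K. u i = (\<Sum>j<K. of_nat (i choose j) * d j)"
proof (induction K)
  case 0
  then show ?case by simp
next
  case (Suc K)
  then obtain d where d: "\<forall>i<K. u i = (\<Sum>j<K. of_nat (i choose j) * d j)" by blast
  define d' where "d' = d(K := u K - (\<Sum>j<K. of_nat (K choose j) * d j))"
  have "u i = (\<Sum>j<Suc K. of_nat (i choose j) * d' j)" if "i < Suc K" for i
  proof (cases "i < K")
    case True
    then show ?thesis using d by (simp add: d'_def binomial_eq_0)
  next
    case False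
    then have "i = K" using that by simp
    then show ?thesis by (simp add: d'_def)
  qed
  then show ?case by blast
qed

lemma fwd_diff_eq_0_imp_eq_0:
  assumes init: "\<And>i. i < k \<Longrightarrow> g i = 0"
    and diff: "\<And>a. a + k \<le> p \<Longrightarrow> fwd_diff k g a = 0"
    and "i \<le> p"
  shows "g i = 0"
  using \<open>i \<le> p\<close>
proof (induction i rule: less_induct)
  case (less i)
  show ?case
  proof (cases "i < k")
    case True
    then show ?thesis by (rule init)
  next
    case False
    define a where "a = i - k"
    have a: "i = a + k" using False by (simp add: a_def)
    have "(\<Sum>r<k. (-1) ^ (k - r) * of_nat (k choose r) * g (a + r)) = 0"
      by (intro sum.neutral ballI) (use less a in auto)
    then have "fwd_diff k g a = g i"
      by (simp add: fwd_diff_def lessThan_Suc_atMost[symmetric] a)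
    then show ?thesis using diff[of a] a less.prems by simp
  qed
qed

lemma fwd_diff_eq_0_imp_choose_expansion:
  assumes "\<And>a. a + k \<le> p \<Longrightarrow> fwd_diff k u a = 0"
  obtains d where "\<And>i. i \<le> p \<Longrightarrow> u i = (\<Sum>j<k. of_nat (i choose j) * d j)"
proof -
  obtain d where d: "\<forall>i<k. u i = (\<Sum>j<k. of_nat (i choose j) * d j)"
    using choose_interpolation by blast
  define v where "v i = u i - (\<Sum>j<k. of_nat (i choose j) * d j)" for i
  have diff: "fwd_diff k v a = 0" if "a + k \<le> p" for a
    using assms[OF that] fwd_diff_sum[of k "\<lambda>j n. of_nat (n choose j)" d "{..<k}" a]
    unfolding v_def fwd_diff_diff by (simp add: fwd_diff_choose)
  have init: "v i = 0" if "i < k" for i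
    using d that by (simp add: v_def)
  have "v i = 0" if "i \<le> p" for i
    using fwd_diff_eq_0_imp_eq_0[OF init diff that] .
  then show ?thesis using that unfolding v_def by simp
qed

section \<open>Polynomial functions divisible by a power of z - w\<close>

inductive polyfun2 :: "(complex \<Rightarrow> complex \<Rightarrow> complex) \<Rightarrow> bool" where
  const: "polyfun2 (\<lambda>z w. c)"
| fst_var: "polyfun2 (\<lambda>z w. z)"
| snd_var: "polyfun2 (\<lambda>z w. w)"
| add: "polyfun2 F \<Longrightarrow> polyfun2 G \<Longrightarrow> polyfun2 (\<lambda>z w. F z w + G z w)"
| mult: "polyfun2 F \<Longrightarrow> polyfun2 G \<Longrightarrow> polyfun2 (\<lambda>z w. F z w * G z w)"

lemma polyfun2_swap: "polyfun2 F \<Longrightarrow> polyfun2 (\<lambda>z w. F w z)"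
  by (induction rule: polyfun2.induct) (auto intro: polyfun2.intros)

lemma polyfun2_power: "polyfun2 F \<Longrightarrow> polyfun2 (\<lambda>z w. F z w ^ n)"
proof (induction n)
  case 0
  then show ?case using polyfun2.const[of 1] by simp
next
  case (Suc n)
  then show ?case using polyfun2.mult[of F "\<lambda>z w. F z w ^ n"] by simp
qed

lemma polyfun2_diff_vars: "polyfun2 (\<lambda>z w. z - w)"
proof -
  have "polyfun2 (\<lambda>z w. z + (-1) * w)"
    by (intro polyfun2.intros)
  then show ?thesis by simp
qed

lemma polyfun2_deriv_snd:
  assumes "polyfun2 F"
  obtains G where "polyfun2 G" and "\<And>z w. ((\<lambda>w'. F z w') has_field_derivative G z w) (at w)"
proof -
  have "\<exists>G. polyfun2 G \<and> (\<forall>z w. ((\<lambda>w'. F z w') has_field_derivative G z w) (at w))"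
    using assms
  proof induction
    case (const c)
    show ?case by (intro exI[of _ "\<lambda>z w. 0"]) (auto intro: polyfun2.intros)
  next
    case fst_var
    show ?case by (intro exI[of _ "\<lambda>z w. 0"]) (auto intro: polyfun2.intros)
  next
    case snd_var
    show ?case by (intro exI[of _ "\<lambda>z w. 1"]) (auto intro: polyfun2.intros)
  next
    case (add F G)
    then obtain F' G' where "polyfun2 F'" "polyfun2 G'"
      "\<forall>z w. ((\<lambda>w'. F z w') has_field_derivative F' z w) (at w)"
      "\<forall>z w. ((\<lambda>w'. G z w') has_field_derivative G' z w) (at w)" by blast
    then show ?case
      by (intro exI[of _ "\<lambda>z w. F' z w + G' z w"]) (auto intro: polyfun2.intros derivative_intros)
  next
    case (mult F G)
    then obtain F' G' where d: "polyfun2 F'" "polyfun2 G'"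
      "\<forall>z w. ((\<lambda>w'. F z w') has_field_derivative F' z w) (at w)"
      "\<forall>z w. ((\<lambda>w'. G z w') has_field_derivative G' z w) (at w)" by blast
    have "((\<lambda>w'. F z w' * G z w') has_field_derivative F z w * G' z w + F' z w * G z w) (at w)" for z w
      using DERIV_mult[OF d(3)[rule_format] d(4)[rule_format]] by (simp add: algebra_simps)
    moreover have "polyfun2 (\<lambda>z w. F z w * G' z w + F' z w * G z w)"
      by (intro polyfun2.intros d mult.hyps)
    ultimately show ?case by blast
  qed
  then show ?thesis using that by blast
qed

definition diag_divisible :: "nat \<Rightarrow> (complex \<Rightarrow> complex \<Rightarrow> complex) \<Rightarrow> bool" where
  "diag_divisible r F \<longleftrightarrow> (\<exists>G. polyfun2 G \<and> (\<forall>z w. F z w = (z - w) ^ r * G z w))"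

lemma diag_divisible_swap:
  assumes "diag_divisible r F"
  shows "diag_divisible r (\<lambda>z w. F w z)"
proof -
  obtain G where G: "polyfun2 G" "\<And>z w. F z w = (z - w) ^ r * G z w"
    using assms diag_divisible_def by blast
  have "F w z = (z - w) ^ r * ((-1) ^ r * G w z)" for z w
    using power_minus[of "z - w" r] by (simp add: G(2))
  moreover have "polyfun2 (\<lambda>z w. (-1) ^ r * G w z)"
    by (intro polyfun2.mult polyfun2.const) (rule polyfun2_swap[OF G(1)])
  ultimately show ?thesis unfolding diag_divisible_def by blast
qed

lemma diag_divisible_deriv_snd:
  assumes "diag_divisible (Suc r) F"
  shows "diag_divisible r (\<lambda>z w. deriv (\<lambda>w'. F z w') w)"
proof -
  obtain G where G: "polyfun2 G" "\<And>z w. F z w = (z - w) ^ Suc r * G z w"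
    using assms diag_divisible_def by blast
  obtain G' where G': "polyfun2 G'" "\<And>z w. ((\<lambda>w'. G z w') has_field_derivative G' z w) (at w)"
    using polyfun2_deriv_snd[OF G(1)] by blast
  have "deriv (\<lambda>w'. F z w') w = (z - w) ^ r * (- of_nat (Suc r) * G z w + (z - w) * G' z w)" for z w
  proof -
    have "((\<lambda>w'. (z - w') ^ Suc r * G z w') has_field_derivative
        (of_nat (Suc r) * (z - w) ^ r * (-1)) * G z w + (z - w) ^ Suc r * G' z w) (at w)"
      by (rule derivative_eq_intros refl G'(2))+ simp
    then show ?thesis
      by (intro DERIV_imp_deriv) (simp add: G(2) algebra_simps)
  qed
  moreover have "polyfun2 (\<lambda>z w. - of_nat (Suc r) * G z w + (z - w) * G' z w)"
    by (intro polyfun2.intros G G' polyfun2_diff_vars)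
  ultimately show ?thesis unfolding diag_divisible_def by blast
qed

lemma diag_divisible_higher_deriv_snd:
  "diag_divisible (r + n) F \<Longrightarrow> diag_divisible r (\<lambda>z w. (deriv ^^ n) (\<lambda>w'. F z w') w)"
proof (induction n arbitrary: r)
  case 0
  then show ?case by simp
next
  case (Suc n)
  have "diag_divisible (Suc r) (\<lambda>z w. (deriv ^^ n) (\<lambda>w'. F z w') w)"
    using Suc.IH[of "Suc r"] Suc.prems by simp
  from diag_divisible_deriv_snd[OF this] show ?case by simp
qed

lemma diag_divisible_higher_deriv_fst:
  assumes "diag_divisible (r + n) F"
  shows "diag_divisible r (\<lambda>z w. (deriv ^^ n) (\<lambda>z'. F z' w) z)"
proof -
  have "diag_divisible r (\<lambda>z w. (deriv ^^ n) (\<lambda>w'. F w' z) w)"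
    by (rule diag_divisible_higher_deriv_snd) (rule diag_divisible_swap[OF assms])
  from diag_divisible_swap[OF this] show ?thesis .
qed

lemma diag_divisible_pder_eq_0:
  assumes "diag_divisible k F" and "m + n < k"
  shows "pder m n F z z = 0"
proof -
  have "diag_divisible ((k - n - m) + m) (\<lambda>z w. (deriv ^^ n) (\<lambda>w'. F z w') w)"
    using diag_divisible_higher_deriv_snd[of "k - n" n F] assms by simp
  from diag_divisible_higher_deriv_fst[OF this] obtain G where
    "\<And>z w. (deriv ^^ m) (\<lambda>z'. (deriv ^^ n) (\<lambda>w'. F z' w') w) z = (z - w) ^ (k - n - m) * G z w"
    unfolding diag_divisible_def by blast
  then show ?thesis using assms(2) by (simp add: pder_def)
qed

section \<open>Power series\<close>

lemma geometric_norm_summable: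
  fixes f :: "nat \<Rightarrow> 'a::real_normed_vector"
  assumes "0 \<le> r" "r < 1" and "\<And>n. norm (f n) \<le> C * r ^ n"
  shows "summable (\<lambda>n. norm (f n))"
  by (rule summable_comparison_test[where g="\<lambda>n. C * r ^ n"])
     (use assms in \<open>auto intro!: summable_mult summable_geometric\<close>)

lemma geometric_pair_summable:
  fixes f :: "nat \<times> nat \<Rightarrow> complex"
  assumes r: "0 \<le> r" "r < 1" and s: "0 \<le> s" "s < 1"
    and bound: "\<And>i l. cmod (f (i, l)) \<le> M * r ^ i * s ^ l"
  shows "f summable_on UNIV"
proof -
  have "cmod (f (0, 0)) \<le> M" using bound[of 0 0] by simp
  then have M: "M \<ge> 0" by (meson norm_ge_zero order_trans)
  have geom: "((\<lambda>n. x ^ n) has_sum (1 / (1 - x))) UNIV" if "0 \<le> x" "x < 1" for x :: real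
    by (rule sums_nonneg_imp_has_sum) (use that in \<open>auto intro: geometric_sums\<close>)
  let ?g = "\<lambda>(i, l). M * r ^ i * s ^ l"
  have "?g summable_on Sigma UNIV (\<lambda>_. UNIV)"
  proof (rule summable_on_SigmaI[where g="\<lambda>i. M * r ^ i * (1 / (1 - s))"])
    show "((\<lambda>l. ?g (i, l)) has_sum M * r ^ i * (1 / (1 - s))) UNIV" for i
      using has_sum_cmult_right[OF geom[OF s], of "M * r ^ i"] by simp
    show "(\<lambda>i. M * r ^ i * (1 / (1 - s))) summable_on UNIV"
      using has_sum_cmult_right[OF geom[OF r], of M]
      by (intro summable_on_cmult_left) (auto simp: summable_on_def)
    show "0 \<le> ?g (i, l)" for i l
      using M r s by simp
  qed
  then have g: "?g summable_on UNIV" by simp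
  have "norm (f x) \<le> ?g x" if "x \<in> UNIV" for x
    using bound[of "fst x" "snd x"] by (simp add: split_beta)
  from summable_on_comparison_test[OF g this]
  have "(\<lambda>x. norm (f x)) summable_on UNIV" by simp
  then show ?thesis by (simp add: summable_on_iff_abs_summable_on_complex)
qed

lemma has_sum_antidiagonals:
  fixes G :: "nat \<times> nat \<Rightarrow> 'a::{topological_comm_monoid_add,t3_space}"
  assumes "(G has_sum s) UNIV"
  shows "(\<lambda>p. \<Sum>i\<le>p. G (i, p - i)) sums s"
proof -
  have "((\<lambda>(p, i). G (i, p - i)) has_sum s) (Sigma UNIV (\<lambda>p. {..p}))"
    using assms by (subst has_sum_reindex_bij_witness[where j="\<lambda>(p, i). (i, p - i)"
          and i="\<lambda>(i, l). (i + l, i)" and T=UNIV and h=G and s'=s]) auto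
  then have "((\<lambda>p. \<Sum>i\<le>p. G (i, p - i)) has_sum s) UNIV"
    by (rule has_sum_SigmaD) (simp add: has_sum_finite)
  then show ?thesis by (rule has_sum_imp_sums)
qed

lemma diffs_funpow:
  fixes c :: "nat \<Rightarrow> 'a::comm_ring_1"
  shows "(diffs ^^ j) c n = of_nat (fact j * ((n + j) choose j)) * c (n + j)"
proof (induction j arbitrary: n)
  case 0
  then show ?case by simp
next
  case (Suc j)
  have "Suc (n + j) * (n + j choose j) = (Suc (n + j) choose Suc j) * Suc j"
    by (rule Suc_times_binomial_eq)
  moreover have "(Suc (n + j) - j) * (Suc (n + j) choose j) = Suc (n + j) * ((Suc (n + j) - 1) choose j)"
    by (rule binomial_absorb_comp)
  moreover have "Suc (n + j) - j = Suc n" by simp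
  ultimately have choose: "Suc j * (n + Suc j choose Suc j) = Suc n * (Suc n + j choose j)"
    by (simp add: mult.commute)
  have "fact (Suc j) * (n + Suc j choose Suc j) = fact j * (Suc j * (n + Suc j choose Suc j))"
    by (simp add: fact_Suc algebra_simps)
  also have "\<dots> = Suc n * (fact j * (Suc n + j choose j))"
    unfolding choose by (simp add: algebra_simps)
  finally have fact: "Suc n * (fact j * (Suc n + j choose j)) = fact (Suc j) * (n + Suc j choose Suc j)"
    by simp
  have "(diffs ^^ Suc j) c n = of_nat (Suc n) * (diffs ^^ j) c (Suc n)"
    by (simp add: diffs_def)
  also have "\<dots> = of_nat (Suc n * (fact j * (Suc n + j choose j))) * c (n + Suc j)"
    using Suc by (simp add: algebra_simps)
  finally show ?case by (simp only: fact)
qed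

lemma powser_higher_deriv:
  fixes c :: "nat \<Rightarrow> complex"
  assumes "\<And>z. norm z < K \<Longrightarrow> (\<lambda>n. c n * z ^ n) sums g z" and "norm z < K"
  shows "(\<lambda>n. (diffs ^^ j) c n * z ^ n) sums (deriv ^^ j) g z"
  using \<open>norm z < K\<close>
proof (induction j arbitrary: z)
  case 0
  then show ?case using assms(1) by simp
next
  case (Suc j)
  have sm: "summable (\<lambda>n. (diffs ^^ j) c n * x ^ n)" if "norm x < K" for x
    using Suc.IH[OF that] by (simp add: sums_iff)
  have "((\<lambda>x. \<Sum>n. (diffs ^^ j) c n * x ^ n) has_field_derivative
          (\<Sum>n. diffs ((diffs ^^ j) c) n * z ^ n)) (at z)"
    by (rule termdiffs_strong'[OF sm Suc.prems])
  then have "((deriv ^^ j) g has_field_derivative (\<Sum>n. diffs ((diffs ^^ j) c) n * z ^ n)) (at z)"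
    by (rule has_field_derivative_transform_within_open[where S="ball 0 K"])
       (use Suc.prems Suc.IH in \<open>auto simp: sums_iff\<close>)
  then have "(deriv ^^ Suc j) g z = (\<Sum>n. (diffs ^^ Suc j) c n * z ^ n)"
    by (simp add: DERIV_imp_deriv)
  moreover have "summable (\<lambda>n. (diffs ^^ Suc j) c n * z ^ n)"
    using termdiff_converges[OF Suc.prems sm] by simp
  ultimately show ?case by (simp add: sums_iff)
qed

lemma powser_higher_deriv_sums:
  fixes c :: "nat \<Rightarrow> complex"
  assumes "\<And>z. norm z < K \<Longrightarrow> (\<lambda>n. c n * z ^ n) sums g z" and "norm t < K"
  shows "(\<lambda>i. of_nat (fact j * (i choose j)) * c i * t ^ i) sums (t ^ j * (deriv ^^ j) g t)"
proof -
  define a where "a i = of_nat (fact j * (i choose j)) * c i * t ^ i" for i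
  have "(\<lambda>n. t ^ j * (of_nat (fact j * ((n + j) choose j)) * c (n + j) * t ^ n))
          sums (t ^ j * (deriv ^^ j) g t)"
    using sums_mult[OF powser_higher_deriv[OF assms]] by (simp add: diffs_funpow)
  then have "(\<lambda>n. a (n + j)) sums (t ^ j * (deriv ^^ j) g t)"
    by (simp add: a_def power_add algebra_simps)
  moreover have "(\<Sum>i<j. a i) = 0" by (simp add: a_def binomial_eq_0)
  ultimately show ?thesis
    unfolding a_def[symmetric] by (simp add: sums_iff_shift)
qed

lemma powser_eq_0_imp_coeff_eq_0:
  fixes a :: "nat \<Rightarrow> complex"
  assumes "r > 0" and sums: "\<And>t. cmod t < r \<Longrightarrow> (\<lambda>n. a n * t ^ n) sums 0"
  shows "a m = 0"
proof (rule ccontr)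
  assume am: "a m \<noteq> 0"
  show False
  proof (cases "m = 0")
    case True
    then show False using sums[of 0] \<open>r > 0\<close> am by simp
  next
    case False
    show False
    proof (rule powser_0_nonzero[where r=r and a=a and \<xi>=0 and f="\<lambda>_. 0" and m=m])
      fix s :: real
      assume s: "0 < s" and nz: "\<And>z::complex. z \<in> cball 0 s - {0} \<Longrightarrow> (\<lambda>_. 0::complex) z \<noteq> 0"
      have "complex_of_real s \<in> cball 0 s - {0}" using s by simp
      then show False using nz by blast
    qed (use assms am False in auto)
  qed
qed

section \<open>Diagonal derivatives of elements of the Hilbert space\<close>

lemma pochhammer_le_pow_fact:
  fixes lam :: real
  assumes "lam > 0"
  shows "pochhammer lam l \<le> (lam + 1) ^ l * fact l"
proof (induction l)
  case 0
  then show ?case by simp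
next
  case (Suc l)
  have "pochhammer lam (Suc l) = pochhammer lam l * (lam + of_nat l)"
    by (rule pochhammer_Suc)
  also have "\<dots> \<le> ((lam + 1) ^ l * fact l) * ((lam + 1) * (of_nat l + 1))"
    using Suc assms by (intro mult_mono) (auto simp: algebra_simps)
  also have "\<dots> = (lam + 1) ^ Suc l * fact (Suc l)"
    by (simp add: algebra_simps)
  finally show ?case .
qed

lemma Hspace_coeff_bound:
  assumes lam: "lam > 0" and b: "b \<in> Hspace lam"
  obtains M where "\<And>i l. cmod (b i l) \<le> M * (lam + 1) ^ l"
proof -
  let ?f = "\<lambda>(i, j). (cmod (b i j))\<^sup>2 * wt lam j"
  define S where "S = infsum ?f UNIV"
  have wt_pos: "wt lam l > 0" for l
    using lam by (simp add: wt_def pochhammer_pos)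
  have term_nonneg: "0 \<le> (cmod (b i l))\<^sup>2 * wt lam l" for i l
    using wt_pos[of l] by (simp add: less_imp_le)
  have term_le: "(cmod (b i l))\<^sup>2 * wt lam l \<le> S" for i l
  proof -
    have "infsum ?f {(i, l)} \<le> infsum ?f UNIV"
      by (rule infsum_mono_neutral) (use b term_nonneg in \<open>auto simp: Hspace_def\<close>)
    then show ?thesis by (simp add: S_def)
  qed
  have S: "S \<ge> 0"
    using term_le[of 0 0] term_nonneg[of 0 0] by linarith
  have "cmod (b i l) \<le> sqrt S * (lam + 1) ^ l" for i l
  proof -
    have "1 / wt lam l \<le> (lam + 1) ^ l"
      using pochhammer_le_pow_fact[OF lam, of l] by (simp add: wt_def divide_le_eq)
    have "(cmod (b i l))\<^sup>2 \<le> S * (1 / wt lam l)"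
      using term_le[of i l] wt_pos[of l] by (simp add: field_simps)
    also have "\<dots> \<le> S * (lam + 1) ^ l"
      using \<open>1 / wt lam l \<le> (lam + 1) ^ l\<close> S by (rule mult_left_mono)
    also have "\<dots> \<le> S * ((lam + 1) ^ l)\<^sup>2"
      using lam S by (intro mult_left_mono) (auto simp: power2_eq_square intro!: one_le_power)
    also have "\<dots> = (sqrt S * (lam + 1) ^ l)\<^sup>2"
      using S by (simp add: power_mult_distrib)
    finally have "(cmod (b i l))\<^sup>2 \<le> (sqrt S * (lam + 1) ^ l)\<^sup>2" .
    moreover have "0 \<le> sqrt S * (lam + 1) ^ l" using S lam by simp
    ultimately show ?thesis by (rule power2_le_imp_le)
  qed
  then show ?thesis using that by blast
qed

context
  fixes b :: coeffs and M q :: real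
  assumes coeff_bound: "\<And>i l. cmod (b i l) \<le> M * q ^ l" and q_ge_1: "q \<ge> 1"
begin

lemma coeff_power_bound:
  assumes "cmod w \<le> 1 / (4 * q)"
  shows "cmod (b i l * w ^ l) \<le> M * (1/4) ^ l"
proof -
  have "cmod (b i 0) \<le> M" using coeff_bound[of i 0] by simp
  then have M: "M \<ge> 0" by (meson norm_ge_zero order_trans)
  have "q * cmod w \<le> 1/4"
    using assms q_ge_1 by (simp add: field_simps)
  then have "(q * cmod w) ^ l \<le> (1/4) ^ l"
    using q_ge_1 by (intro power_mono) auto
  have "cmod (b i l * w ^ l) = cmod (b i l) * cmod w ^ l"
    by (simp add: norm_mult norm_power)
  also have "\<dots> \<le> M * q ^ l * cmod w ^ l"
    by (intro mult_right_mono coeff_bound) auto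
  also have "\<dots> = M * (q * cmod w) ^ l"
    by (simp add: power_mult_distrib)
  also have "\<dots> \<le> M * (1/4) ^ l"
    using \<open>(q * cmod w) ^ l \<le> (1/4) ^ l\<close> M by (rule mult_left_mono)
  finally show ?thesis .
qed

lemma coeff_term_bound:
  assumes "cmod x \<le> 1 / (4 * q)" and "cmod y \<le> 1 / (4 * q)"
  shows "cmod (b i l * x ^ i * y ^ l) \<le> M * (1/4) ^ i * (1/4) ^ l"
proof -
  have "1 / (4 * q) \<le> 1/4" using q_ge_1 by (simp add: field_simps)
  then have "cmod x \<le> 1/4" using assms(1) by simp
  then have "cmod x ^ i \<le> (1/4) ^ i"
    by (intro power_mono) auto
  have "cmod (b i l * x ^ i * y ^ l) = cmod x ^ i * cmod (b i l * y ^ l)"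
    by (simp add: norm_mult norm_power)
  also have "\<dots> \<le> (1/4) ^ i * (M * (1/4) ^ l)"
    using \<open>cmod x ^ i \<le> (1/4) ^ i\<close> coeff_power_bound[OF assms(2)]
    by (intro mult_mono) auto
  finally show ?thesis by (simp add: mult_ac)
qed

lemma coeff_row_sums:
  assumes "cmod w \<le> 1 / (4 * q)"
  shows "(\<lambda>l. b i l * w ^ l) sums (\<Sum>l. b i l * w ^ l)"
proof -
  have "summable (\<lambda>l. norm (b i l * w ^ l))"
    by (rule geometric_norm_summable[where r="1/4"]) (use coeff_power_bound[OF assms] in auto)
  then show ?thesis by (rule summable_sums[OF summable_norm_cancel])
qed

lemma fn_row_expansion:
  assumes z: "cmod z \<le> 1 / (4 * q)" and w: "cmod w \<le> 1 / (4 * q)"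
  shows "(\<lambda>i. (\<Sum>l. b i l * w ^ l) * z ^ i) sums fn b z w"
proof -
  define F where "F = (\<lambda>(i, l). b i l * z ^ i * w ^ l)"
  have "F summable_on UNIV"
    unfolding F_def by (rule geometric_pair_summable[where r="1/4" and s="1/4" and M=M])
      (use coeff_term_bound[OF z w] in auto)
  then have "(F has_sum fn b z w) (Sigma UNIV (\<lambda>_. UNIV))"
    using has_sum_infsum[of F UNIV] by (simp add: fn_def F_def)
  moreover have "((\<lambda>l. F (i, l)) has_sum ((\<Sum>l. b i l * w ^ l) * z ^ i)) UNIV" for i
  proof (rule norm_summable_imp_has_sum)
    show "summable (\<lambda>l. norm (F (i, l)))"
      by (rule geometric_norm_summable[where r="1/4" and C="M * (1/4) ^ i"])
         (use coeff_term_bound[OF z w] in \<open>auto simp: F_def\<close>)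
    show "(\<lambda>l. F (i, l)) sums ((\<Sum>l. b i l * w ^ l) * z ^ i)"
      using sums_mult2[OF coeff_row_sums[OF w], of i "z ^ i"] by (simp add: F_def algebra_simps)
  qed
  ultimately have "((\<lambda>i. (\<Sum>l. b i l * w ^ l) * z ^ i) has_sum fn b z w) UNIV"
    by (rule has_sum_SigmaD)
  then show ?thesis by (rule has_sum_imp_sums)
qed

text \<open>Working at radius \<open>1 / (4 * q)\<close> rather than \<open>1 / (2 * q)\<close> leaves room to absorb
  \<open>i choose j \<le> 2 ^ i\<close>.\<close>
lemma choose_term_bound:
  assumes "cmod t \<le> 1 / (4 * q)"
  shows "cmod (of_nat (fact j * (i choose j)) * (b i l * t ^ i * t ^ l))
           \<le> fact j * M * (1/2) ^ i * (1/4) ^ l"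
proof -
  have "real (i choose j) \<le> real (2 ^ i)"
    by (rule of_nat_mono[OF binomial_le_pow2])
  then have "fact j * real (i choose j) \<le> fact j * 2 ^ i"
    by (intro mult_left_mono) auto
  have "cmod (of_nat (fact j * (i choose j)) * (b i l * t ^ i * t ^ l))
      = fact j * real (i choose j) * cmod (b i l * t ^ i * t ^ l)"
    by (simp add: norm_mult)
  also have "\<dots> \<le> fact j * 2 ^ i * (M * (1/4) ^ i * (1/4) ^ l)"
    using \<open>fact j * real (i choose j) \<le> fact j * 2 ^ i\<close> coeff_term_bound[OF assms assms, of i l]
    by (intro mult_mono) auto
  also have "\<dots> = fact j * M * (2 ^ i * (1/4) ^ i) * (1/4) ^ l"
    by (simp add: mult_ac)
  also have "(2::real) ^ i * (1/4) ^ i = (1/2) ^ i"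
    by (simp add: power_mult_distrib[symmetric])
  finally show ?thesis .
qed

lemma choose_row_sums_imp_degree_sums:
  assumes t: "cmod t \<le> 1 / (4 * q)"
    and rows: "(\<lambda>i. of_nat (fact j * (i choose j)) * (\<Sum>l. b i l * t ^ l) * t ^ i) sums s"
  shows "(\<lambda>p. of_nat (fact j) * (\<Sum>i\<le>p. of_nat (i choose j) * b i (p - i)) * t ^ p) sums s"
proof -
  define G where "G = (\<lambda>(i, l). of_nat (fact j * (i choose j)) * (b i l * t ^ i * t ^ l))"
  have G_bound: "cmod (G (i, l)) \<le> fact j * M * (1/2) ^ i * (1/4) ^ l" for i l
    unfolding G_def using choose_term_bound[OF t] by simp
  then have "G summable_on UNIV"
    by (intro geometric_pair_summable[where r="1/2" and s="1/4"]) auto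
  then have "(G has_sum infsum G UNIV) (Sigma UNIV (\<lambda>_. UNIV))"
    using has_sum_infsum[of G UNIV] by simp
  moreover have "((\<lambda>l. G (i, l)) has_sum (of_nat (fact j * (i choose j)) * (\<Sum>l. b i l * t ^ l) * t ^ i)) UNIV"
    for i
  proof (rule norm_summable_imp_has_sum)
    show "summable (\<lambda>l. norm (G (i, l)))"
      by (rule geometric_norm_summable[where r="1/4" and C="fact j * M * (1/2) ^ i"])
         (use G_bound in simp_all)
    show "(\<lambda>l. G (i, l)) sums (of_nat (fact j * (i choose j)) * (\<Sum>l. b i l * t ^ l) * t ^ i)"
      using sums_mult[OF coeff_row_sums[OF t, of i], of "of_nat (fact j * (i choose j)) * t ^ i"]
      by (simp add: G_def algebra_simps)
  qed
  ultimately have "((\<lambda>i. of_nat (fact j * (i choose j)) * (\<Sum>l. b i l * t ^ l) * t ^ i)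
      has_sum infsum G UNIV) UNIV"
    by (rule has_sum_SigmaD)
  from sums_unique2[OF has_sum_imp_sums[OF this] rows]
  have "(G has_sum s) UNIV"
    using has_sum_infsum[OF \<open>G summable_on UNIV\<close>] by simp
  then have "(\<lambda>p. \<Sum>i\<le>p. G (i, p - i)) sums s"
    by (rule has_sum_antidiagonals)
  moreover have "(\<Sum>i\<le>p. G (i, p - i)) =
      of_nat (fact j) * (\<Sum>i\<le>p. of_nat (i choose j) * b i (p - i)) * t ^ p" for p
  proof -
    have "G (i, p - i) = of_nat (fact j) * (of_nat (i choose j) * b i (p - i)) * t ^ p" if "i \<le> p" for i
      using that by (simp add: G_def power_add[symmetric] algebra_simps)
    then show ?thesis
      by (simp add: sum_distrib_left sum_distrib_right)
  qed
  ultimately show ?thesis by simp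
qed

lemma pder_fn_diag_sums:
  assumes t: "cmod t < 1 / (4 * q)"
  shows "(\<lambda>p. of_nat (fact j) * (\<Sum>i\<le>p. of_nat (i choose j) * b i (p - i)) * t ^ p)
           sums (t ^ j * pder j 0 (fn b) t t)"
proof (rule choose_row_sums_imp_degree_sums)
  show "cmod t \<le> 1 / (4 * q)" using t by simp
  have "(\<lambda>i. of_nat (fact j * (i choose j)) * (\<Sum>l. b i l * t ^ l) * t ^ i)
      sums (t ^ j * (deriv ^^ j) (\<lambda>z. fn b z t) t)"
  proof (rule powser_higher_deriv_sums[where K="1 / (4 * q)"])
    show "(\<lambda>n. (\<Sum>l. b n l * t ^ l) * z ^ n) sums fn b z t" if "norm z < 1 / (4 * q)" for z
      using fn_row_expansion[of z t] that t by simp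
  qed (use t in simp)
  then show "(\<lambda>i. of_nat (fact j * (i choose j)) * (\<Sum>l. b i l * t ^ l) * t ^ i)
      sums (t ^ j * pder j 0 (fn b) t t)"
    by (simp add: pder_def)
qed

end

lemma diag_pder_eq_0_imp_coeff_sum_eq_0:
  assumes lam: "lam > 0" and b: "b \<in> Hspace lam"
    and pder: "\<And>t. t \<in> ball 0 1 \<Longrightarrow> pder j 0 (fn b) t t = 0"
  shows "(\<Sum>i\<le>p. of_nat (i choose j) * b i (p - i)) = 0"
proof -
  obtain M where bound: "\<And>i l. cmod (b i l) \<le> M * (lam + 1) ^ l"
    using Hspace_coeff_bound[OF lam b] by blast
  have q: "lam + 1 \<ge> 1" using lam by simp
  have r: "0 < 1 / (4 * (lam + 1))" and r_lt_1: "1 / (4 * (lam + 1)) < 1"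
    using lam by (simp_all add: field_simps)
  have sums: "(\<lambda>p. of_nat (fact j) * (\<Sum>i\<le>p. of_nat (i choose j) * b i (p - i)) * t ^ p) sums 0"
    if t: "cmod t < 1 / (4 * (lam + 1))" for t
  proof -
    have "pder j 0 (fn b) t t = 0"
      using t r_lt_1 by (intro pder) simp
    with pder_fn_diag_sums[where b=b and M=M and q="lam + 1", OF bound q t, of j]
    show ?thesis by simp
  qed
  have "of_nat (fact j) * (\<Sum>i\<le>p. of_nat (i choose j) * b i (p - i)) = 0"
    by (rule powser_eq_0_imp_coeff_eq_0[OF r sums])
  then show ?thesis by simp
qed

section \<open>The basis of V_k(p)\<close>

lemma homogeneous_has_sum:
  fixes g :: "nat \<Rightarrow> nat \<Rightarrow> 'a::{comm_monoid_add,topological_space}"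
  assumes "\<And>i l. i + l \<noteq> p \<Longrightarrow> g i l = 0"
  shows "((\<lambda>(i, l). g i l) has_sum (\<Sum>i\<le>p. g i (p - i))) UNIV"
proof -
  let ?T = "(\<lambda>i. (i, p - i)) ` {..p}"
  have "(\<Sum>i\<le>p. g i (p - i)) = (\<Sum>(i, l)\<in>?T. g i l)"
    by (subst sum.reindex) (auto simp: inj_on_def)
  moreover have "((\<lambda>(i, l). g i l) has_sum (\<Sum>(i, l)\<in>?T. g i l)) UNIV
      \<longleftrightarrow> ((\<lambda>(i, l). g i l) has_sum (\<Sum>(i, l)\<in>?T. g i l)) ?T"
    by (rule has_sum_cong_neutral) (use assms in \<open>auto simp: image_iff\<close>)
  ultimately show ?thesis by simp
qed

lemma homogeneous_in_Hspace:
  assumes "\<And>i l. i + l \<noteq> p \<Longrightarrow> a i l = 0"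
  shows "a \<in> Hspace lam"
  using homogeneous_has_sum[of p "\<lambda>i j. (cmod (a i j))\<^sup>2 * wt lam j"] assms
  by (auto simp: Hspace_def summable_on_def)

lemma ip_homogeneous:
  assumes "\<And>i l. i + l \<noteq> p \<Longrightarrow> f i l = 0"
  shows "ip lam f b = (\<Sum>i\<le>p. f i (p - i) * cnj (b i (p - i)) * of_real (wt lam (p - i)))"
  unfolding ip_def by (rule infsumI, rule homogeneous_has_sum) (simp add: assms)

text \<open>The coefficient of \<open>x ^ m\<close> in \<open>(1 - x) powr (- lam)\<close>.\<close>
definition kernel_coeff :: "real \<Rightarrow> nat \<Rightarrow> real" where
  "kernel_coeff lam m = (real m + lam - 1) gchoose m"

lemma kernel_coeff_eq: "kernel_coeff lam m = pochhammer lam m / fact m"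
  by (simp add: kernel_coeff_def gbinomial_pochhammer')

lemma kernel_coeff_pos: "lam > 0 \<Longrightarrow> kernel_coeff lam m > 0"
  by (simp add: kernel_coeff_eq pochhammer_pos)

lemma kernel_coeff_mult_wt: "lam > 0 \<Longrightarrow> kernel_coeff lam m * wt lam m = 1"
  using pochhammer_pos[of lam m] by (simp add: kernel_coeff_eq wt_def)

lemma hcoef_eq:
  "hcoef lam j p i l = (if i + l = p then of_nat (i choose j) * of_real (kernel_coeff lam (p - i)) else 0)"
  by (simp add: hcoef_def kernel_coeff_def binomial_eq_0 not_le)

definition diff_coeff :: "nat \<Rightarrow> nat \<Rightarrow> nat \<Rightarrow> 'a::comm_ring_1" where
  "diff_coeff k a i = (if a \<le> i \<and> i \<le> a + k then (-1) ^ (a + k - i) * of_nat (k choose (i - a)) else 0)"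

lemma sum_diff_coeff:
  assumes "a + k \<le> p"
  shows "(\<Sum>i\<le>p. diff_coeff k a i * g i) = fwd_diff k g a"
proof -
  have "(\<Sum>i\<le>p. diff_coeff k a i * g i) = (\<Sum>i\<in>{a..a+k}. (-1) ^ (a + k - i) * of_nat (k choose (i - a)) * g i)"
    by (rule sum.mono_neutral_cong_right) (use assms in \<open>auto simp: diff_coeff_def\<close>)
  also have "\<dots> = (\<Sum>r\<in>{0..k}. (-1) ^ (a + k - (r + a)) * of_nat (k choose (r + a - a)) * g (r + a))"
    using sum.shift_bounds_cl_nat_ivl[of "\<lambda>i. (-1) ^ (a + k - i) * of_nat (k choose (i - a)) * g i" 0 a k]
    by (simp add: add.commute)
  also have "\<dots> = fwd_diff k g a"
    by (simp add: fwd_diff_def atLeast0AtMost add.commute)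
  finally show ?thesis .
qed

definition diag_test :: "nat \<Rightarrow> nat \<Rightarrow> nat \<Rightarrow> coeffs" where
  "diag_test k a p = (\<lambda>i l. if i + l = p then diff_coeff k a i else 0)"

lemma fn_diag_test:
  assumes "a + k \<le> p"
  shows "fn (diag_test k a p) z w = (z - w) ^ k * (z ^ a * w ^ (p - k - a))"
proof -
  have "fn (diag_test k a p) z w = (\<Sum>i\<le>p. diag_test k a p i (p - i) * z ^ i * w ^ (p - i))"
    unfolding fn_def by (rule infsumI, rule homogeneous_has_sum) (simp add: diag_test_def)
  also have "\<dots> = (\<Sum>i\<le>p. diff_coeff k a i * (z ^ i * w ^ (p - i)))"
    by (simp add: diag_test_def mult.assoc)
  also have "\<dots> = (\<Sum>r\<le>k. (-1) ^ (k - r) * of_nat (k choose r) * (z ^ (a + r) * w ^ (p - (a + r))))"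
    by (simp add: sum_diff_coeff[OF assms] fwd_diff_def)
  also have "\<dots> = (\<Sum>r\<le>k. of_nat (k choose r) * z ^ r * (- w) ^ (k - r)) * (z ^ a * w ^ (p - k - a))"
    unfolding sum_distrib_right
  proof (rule sum.cong)
    fix r
    assume "r \<in> {..k}"
    then have "p - (a + r) = (k - r) + (p - k - a)" using assms by simp
    then show "(-1) ^ (k - r) * of_nat (k choose r) * (z ^ (a + r) * w ^ (p - (a + r)))
        = of_nat (k choose r) * z ^ r * (- w) ^ (k - r) * (z ^ a * w ^ (p - k - a))"
      by (simp only: power_add power_minus[of w]) (simp add: mult_ac)
  qed simp
  also have "\<dots> = (z - w) ^ k * (z ^ a * w ^ (p - k - a))"
    using binomial_ring[of z "- w" k] by simp
  finally show ?thesis .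
qed

lemma vanish_diag_diag_test:
  assumes "a + k \<le> p"
  shows "vanish_diag k (diag_test k a p)"
proof -
  have "polyfun2 (\<lambda>z w. z ^ a * w ^ (p - k - a))"
    by (intro polyfun2.mult polyfun2_power polyfun2.fst_var polyfun2.snd_var)
  then have "diag_divisible k (fn (diag_test k a p))"
    unfolding diag_divisible_def by (auto simp: fn_diag_test[OF assms])
  then show ?thesis
    unfolding vanish_diag_def using diag_divisible_pder_eq_0 by blast
qed

lemma hcoef_in_Vp:
  assumes lam: "lam > 0" and "j < k"
  shows "hcoef lam j p \<in> Vp k lam p"
proof -
  have hom: "\<And>i l. i + l \<noteq> p \<Longrightarrow> hcoef lam j p i l = 0"
    by (simp add: hcoef_def)
  have "ip lam (hcoef lam j p) b = 0" if b: "b \<in> Hspace lam" and "vanish_diag k b" for b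
  proof -
    have "pder j 0 (fn b) t t = 0" if "t \<in> ball 0 1" for t
      using \<open>vanish_diag k b\<close> \<open>j < k\<close> that unfolding vanish_diag_def by simp
    then have sum_eq_0: "(\<Sum>i\<le>p. of_nat (i choose j) * b i (p - i)) = 0"
      by (rule diag_pder_eq_0_imp_coeff_sum_eq_0[OF lam b])
    have "ip lam (hcoef lam j p) b
        = (\<Sum>i\<le>p. hcoef lam j p i (p - i) * cnj (b i (p - i)) * of_real (wt lam (p - i)))"
      by (rule ip_homogeneous[OF hom])
    also have "\<dots> = (\<Sum>i\<le>p. of_nat (i choose j) * cnj (b i (p - i))
                        * of_real (kernel_coeff lam (p - i) * wt lam (p - i)))"
      by (intro sum.cong) (auto simp: hcoef_eq mult_ac)
    also have "\<dots> = cnj (\<Sum>i\<le>p. of_nat (i choose j) * b i (p - i))"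
      by (simp add: kernel_coeff_mult_wt[OF lam])
    finally show ?thesis by (simp add: sum_eq_0)
  qed
  then show ?thesis
    using homogeneous_in_Hspace[OF hom] hom by (auto simp: Vp_def V_def Hom_def)
qed

lemma hcoef_linear_independent:
  assumes lam: "lam > 0" and "k \<le> p + 1"
    and zero: "(\<lambda>i l. \<Sum>j<k. c j * hcoef lam j p i l) = (\<lambda>i l. 0)"
  shows "j < k \<Longrightarrow> c j = 0"
proof (induction j rule: less_induct)
  case (less j)
  then have "j \<le> p" using assms(2) by simp
  have "c j' * hcoef lam j' p j (p - j) = (if j' = j then c j * of_real (kernel_coeff lam (p - j)) else 0)"
    if "j' < k" for j'
    using less.IH[of j'] that \<open>j \<le> p\<close> by (cases "j' < j") (auto simp: hcoef_eq binomial_eq_0)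
  then have "(\<Sum>j'<k. c j' * hcoef lam j' p j (p - j))
      = (\<Sum>j'<k. if j' = j then c j * of_real (kernel_coeff lam (p - j)) else 0)"
    by (intro sum.cong) simp_all
  also have "\<dots> = c j * of_real (kernel_coeff lam (p - j))"
    using less.prems by simp
  finally have "(\<Sum>j'<k. c j' * hcoef lam j' p j (p - j)) = c j * of_real (kernel_coeff lam (p - j))" .
  moreover have "(\<Sum>j'<k. c j' * hcoef lam j' p j (p - j)) = 0"
    using fun_cong[OF fun_cong[OF zero]] by simp
  moreover have "kernel_coeff lam (p - j) \<noteq> 0"
    using kernel_coeff_pos[OF lam, of "p - j"] by auto
  ultimately show "c j = 0" by simp
qed

lemma Vp_in_span_hcoef:
  assumes lam: "lam > 0" and f: "f \<in> Vp k lam p"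
  obtains c where "f = (\<lambda>i l. \<Sum>j<k. c j * hcoef lam j p i l)"
proof -
  from f have hom: "\<And>i l. i + l \<noteq> p \<Longrightarrow> f i l = 0"
    and orth: "\<And>b. b \<in> Hspace lam \<Longrightarrow> vanish_diag k b \<Longrightarrow> ip lam f b = 0"
    unfolding Vp_def V_def Hom_def by auto
  define u where "u i = f i (p - i) * of_real (wt lam (p - i))" for i
  have diff: "fwd_diff k u a = 0" if a: "a + k \<le> p" for a
  proof -
    have "fwd_diff k u a = (\<Sum>i\<le>p. diff_coeff k a i * u i)"
      by (simp add: sum_diff_coeff[OF a])
    also have "\<dots> = ip lam f (diag_test k a p)"
      by (auto simp: ip_homogeneous[OF hom] diag_test_def u_def diff_coeff_def mult_ac intro!: sum.cong)
    also have "\<dots> = 0"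
      by (rule orth[OF homogeneous_in_Hspace[of p] vanish_diag_diag_test[OF a]]) (simp add: diag_test_def)
    finally show ?thesis .
  qed
  obtain d where d: "\<And>i. i \<le> p \<Longrightarrow> u i = (\<Sum>j<k. of_nat (i choose j) * d j)"
    using fwd_diff_eq_0_imp_choose_expansion[OF diff] by blast
  have "f i l = (\<Sum>j<k. d j * hcoef lam j p i l)" for i l
  proof (cases "i + l = p")
    case False
    then show ?thesis by (simp add: hom hcoef_def)
  next
    case True
    then have l: "l = p - i" by simp
    have "f i l = u i * of_real (kernel_coeff lam (p - i))"
      using kernel_coeff_mult_wt[OF lam, of "p - i"] unfolding l
      by (simp add: u_def mult.assoc flip: of_real_mult) (simp add: mult.commute)
    also have "\<dots> = (\<Sum>j<k. d j * hcoef lam j p i l)"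
      using d[of i] True by (auto simp: hcoef_eq sum_distrib_left mult_ac)
    finally show ?thesis .
  qed
  then show ?thesis using that by blast
qed

theorem lemma6p3:
  fixes lam :: real and p k :: nat
  assumes "lam > 0" and "k \<le> p + 1"
  shows "(\<forall>j<k. hcoef lam j p \<in> Vp k lam p)
    \<and> (\<forall>c :: nat \<Rightarrow> complex. (\<lambda>i l. \<Sum>j<k. c j * hcoef lam j p i l) = (\<lambda>i l. 0)
          \<longrightarrow> (\<forall>j<k. c j = 0))
    \<and> (\<forall>f \<in> Vp k lam p. \<exists>c :: nat \<Rightarrow> complex. f = (\<lambda>i l. \<Sum>j<k. c j * hcoef lam j p i l))"
proof (intro conjI allI impI ballI)
  show "hcoef lam j p \<in> Vp k lam p" if "j < k" for j
    using hcoef_in_Vp[OF assms(1) that] .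
  show "c j = 0" if "(\<lambda>i l. \<Sum>j<k. c j * hcoef lam j p i l) = (\<lambda>i l. 0)" and "j < k" for c j
    using hcoef_linear_independent[OF assms that] .
  show "\<exists>c. f = (\<lambda>i l. \<Sum>j<k. c j * hcoef lam j p i l)" if "f \<in> Vp k lam p" for f
    using Vp_in_span_hcoef[OF assms(1) that] by blast
qed

end
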